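(* Let $(x,y,z)$ be positive integers with $x\ge2$, $4\le y-x\le 5000$, satisfying $$(x-1)x(x+1)(y-1)y(y+1)=(z-1)z(z+1).$$ Then $(x,y,z)=(F_{2n-1},F_{2n+1},F_{2n}^2)$ for some integer $n\ge1$.
   Context: $F_m$ denotes the $m$-th Fibonacci number: $F_0=0$, $F_1=1$, $F_{m+1}=F_m+F_{m-1}$. The condition $x\ge 2$ excludes the solutions with $x=1$, for which both sides vanish. *)

theory Defs
  imports "HOL-Number_Theory.Fib"
begin

end

theory Submission
  imports Defs
begin

(*
  Put d = x y - z. Expanding, the equation becomes
    x y (y^2 - 3 d x y + x^2 + 3 d^2 - 2) = d^3 - d,
  and comparing cubes shows 0 < 6 d < x y.
  For d = 1 this says x^2 - 3 x y + y^2 = -1, whose solutions with 0 < x < y are the pairs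
  (F_{2n-1}, F_{2n+1}); then z = x y - 1 = F_{2n}^2 by Cassini's identity.
  For d >= 2 the quadratic factor is positive, which forces y >= 3 d x / 2. Then
  3 x^2 < 2 d^2 and d (3 x^2 - 2) <= x (y + 1), so y - x <= 5000 leaves only x <= 37 and
  finitely many d. For y >= 3 d x / 2 the sign of the cubic is monotone in y, so a sign change
  between consecutive integers there, found by computation for each remaining (x, d),
  excludes an integer root.
*)

lemma consecutive_products_eq_less:
  fixes x y z :: int
  assumes "2 \<le> x" "2 \<le> y" "0 < z"
    and eq: "(x - 1) * x * (x + 1) * ((y - 1) * y * (y + 1)) = (z - 1) * z * (z + 1)"
  shows "z < x * y"
proof (rule ccontr)
  define P where "P = x * y"
  assume "\<not> z < x * y"
  then have "P \<le> z"
    by (simp add: P_def)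
  have "1 \<le> P"
    using mult_mono[of 2 x 2 y] assms(1,2) by (simp add: P_def)
  then have "1 \<le> P * P"
    using mult_mono[of 1 P 1 P] by simp
  moreover have "0 \<le> z * z + z * P"
    using \<open>1 \<le> P\<close> \<open>P \<le> z\<close> by simp
  ultimately have "0 \<le> (z - P) * (z * z + z * P + P * P - 1)"
    using \<open>P \<le> z\<close> by simp
  then have "(P - 1) * P * (P + 1) \<le> (z - 1) * z * (z + 1)"
    by (simp add: algebra_simps)
  moreover have "(x - 1) * x * (x + 1) * ((y - 1) * y * (y + 1))
      = (P - 1) * P * (P + 1) - P * (x * x + y * y - 2)"
    by (simp add: P_def algebra_simps)
  moreover have "0 < P * (x * x + y * y - 2)"
  proof (rule mult_pos_pos)
    show "0 < P"
      using \<open>1 \<le> P\<close> by simp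
    show "0 < x * x + y * y - 2"
      using mult_mono[of 2 x 2 x] mult_mono[of 2 y 2 y] assms(1,2) by simp
  qed
  ultimately show False
    using eq by linarith
qed

lemma consecutive_products_eq_greater:
  fixes x y z :: int
  assumes "2 \<le> x" "6 \<le> y" "0 < z"
    and eq: "(x - 1) * x * (x + 1) * ((y - 1) * y * (y + 1)) = (z - 1) * z * (z + 1)"
  shows "5 * (x * y) < 6 * z"
proof (rule ccontr)
  define P where "P = x * y"
  assume "\<not> 5 * (x * y) < 6 * z"
  then have "(6 * z) ^ 3 \<le> (5 * P) ^ 3"
    using assms(3) by (intro power_mono) (simp_all add: P_def)
  then have upper: "216 * z ^ 3 \<le> 125 * P ^ 3"
    by (simp add: power_mult_distrib)
  have "4 * 1 \<le> x * x" and "36 * 1 \<le> y * y"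
    using mult_mono[of 2 x 2 x] mult_mono[of 6 y 6 y] assms(1,2) by simp_all
  then have hx: "3 * x ^ 3 \<le> 4 * ((x - 1) * x * (x + 1))"
    and hy: "35 * y ^ 3 \<le> 36 * ((y - 1) * y * (y + 1))"
    using mult_left_mono[of 4 "x * x" x] mult_left_mono[of 36 "y * y" y] assms(1,2)
    by (simp_all add: power3_eq_cube algebra_simps)
  have "0 \<le> x ^ 3" and "0 \<le> y ^ 3"
    using assms(1,2) by simp_all
  then have "(3 * x ^ 3) * (35 * y ^ 3) \<le> (4 * ((x - 1) * x * (x + 1))) * (36 * ((y - 1) * y * (y + 1)))"
    by (intro mult_mono[OF hx hy]) (use hx in linarith)+
  then have "105 * P ^ 3 \<le> 144 * ((z - 1) * z * (z + 1))"
    using eq by (simp add: P_def power_mult_distrib algebra_simps)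
  moreover have "(z - 1) * z * (z + 1) < z ^ 3"
    using assms(3) by (simp add: power3_eq_cube algebra_simps)
  moreover have "0 < P ^ 3"
    using assms(1,2) by (simp add: P_def)
  ultimately show False
    using upper by linarith
qed

definition psi :: "int \<Rightarrow> int \<Rightarrow> int \<Rightarrow> int" where
  "psi x d y = x * y * (y * (y - 3 * d * x) + x * x + 3 * d * d - 2) - (d * d * d - d)"

lemma psi_product_defect:
  fixes x y z :: int
  shows "psi x (x * y - z) y = (z - 1) * z * (z + 1) - (x - 1) * x * (x + 1) * ((y - 1) * y * (y + 1))"
  by (simp add: psi_def algebra_simps)

lemma fib_add_four: "int (fib (n + 4)) = 3 * int (fib (n + 2)) - int (fib n)"
  by (simp add: eval_nat_numeral)

(* Vieta jumping: (x, y) \<mapsto> (3 x - y, x) is a smaller solution, down to (1, 2). *)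

lemma pell_odd_fib:
  fixes x y :: int
  assumes "0 < x" "x < y" "x * x - 3 * x * y + y * y = -1"
  shows "\<exists>k. x = int (fib (2 * k + 1)) \<and> y = int (fib (2 * k + 3))"
  using assms
proof (induction "nat x" arbitrary: x y rule: less_induct)
  case less
  show ?case
  proof (cases "x = 1")
    case True
    then have "(y - 1) * (y - 2) = 0"
      using less.prems(3) by (simp add: algebra_simps)
    then have "y = 2"
      using less.prems(2) True by simp
    then show ?thesis
      using True by (intro exI[of _ 0]) (simp add: numeral_eq_Suc)
  next
    case False
    define x' where "x' = 3 * x - y"
    have prod: "x' * y = x * x + 1"
      using less.prems(3) by (simp add: x'_def algebra_simps)
    have "0 < x' * y"
      using prod by (simp add: add_nonneg_pos)
    then have "0 < x'"
      using zero_less_mult_pos2 less.prems(1,2) by fastforce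
    have "x * x + x \<le> x * y"
      using less.prems(1,2) mult_left_mono[of "x + 1" y x] by (simp add: algebra_simps)
    then have "x' * y < x * y"
      using prod less.prems(1) False by simp
    then have "x' < x"
      using less.prems(1,2) by simp
    moreover have "x' * x' - 3 * x' * x + x * x = -1"
      using less.prems(3) by (simp add: x'_def algebra_simps)
    ultimately obtain k where k: "x' = int (fib (2 * k + 1))" "x = int (fib (2 * k + 3))"
      using less.hyps[of x' x] \<open>0 < x'\<close> by auto
    have i: "2 * (k + 1) + 1 = 2 * k + 3" "2 * (k + 1) + 3 = 2 * k + 1 + 4" "2 * k + 1 + 2 = 2 * k + 3"
      by simp_all
    have "y = 3 * x - x'"
      by (simp add: x'_def)
    then have "y = int (fib (2 * (k + 1) + 3))"
      using k fib_add_four[of "2 * k + 1"] unfolding i by linarith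
    moreover have "x = int (fib (2 * (k + 1) + 1))"
      using k(2) unfolding i .
    ultimately show ?thesis
      by blast
  qed
qed

lemma fib_Cassini_odd: "fib (2 * k + 1) * fib (2 * k + 3) = fib (2 * k + 2) ^ 2 + 1"
proof -
  have "2 * k + 3 = Suc (Suc (2 * k + 1))" and "2 * k + 2 = Suc (2 * k + 1)"
    by simp_all
  then show ?thesis
    using fib_Cassini_nat[of "2 * k + 1"] by (simp only:) (simp del: fib.simps add: mult.commute)
qed

lemma psi_unit_defect_root:
  fixes x y :: int
  assumes "psi x 1 y = 0" "0 < x" "x < y"
  shows "\<exists>n\<ge>1. x = int (fib (2 * n - 1)) \<and> y = int (fib (2 * n + 1))
    \<and> x * y - 1 = int (fib (2 * n)) ^ 2"
proof -
  have "x * y * (x * x - 3 * x * y + y * y + 1) = 0"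
    using assms(1) by (simp add: psi_def algebra_simps)
  then have "x * x - 3 * x * y + y * y = -1"
    using assms(2,3) by simp
  then obtain k where k: "x = int (fib (2 * k + 1))" "y = int (fib (2 * k + 3))"
    using pell_odd_fib assms(2,3) by blast
  have "x * y = int (fib (2 * k + 1) * fib (2 * k + 3))"
    using k by (simp only: of_nat_mult)
  also have "\<dots> = int (fib (2 * k + 2)) ^ 2 + 1"
    by (simp only: fib_Cassini_odd of_nat_add of_nat_power of_nat_1)
  finally have "x * y - 1 = int (fib (2 * k + 2)) ^ 2"
    by simp
  moreover have "2 * (k + 1) - 1 = 2 * k + 1" "2 * (k + 1) + 1 = 2 * k + 3" "2 * (k + 1) = 2 * k + 2"
    by simp_all
  ultimately show ?thesis
    using k by (intro exI[of _ "k + 1"]) (simp only: le_add2 simp_thms)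
qed

lemma psi_root_cofactor_pos:
  fixes x d y :: int
  assumes root: "psi x d y = 0" and "0 < x" "0 < y" "2 \<le> d"
  shows "0 < y * (y - 3 * d * x) + x * x + 3 * d * d - 2"
proof -
  have "0 < d * ((d - 1) * (d + 1))"
    using assms(4) by simp
  then have "0 < x * y * (y * (y - 3 * d * x) + x * x + 3 * d * d - 2)"
    using root by (simp add: psi_def algebra_simps)
  then show ?thesis
    by (rule zero_less_mult_pos) (use assms(2,3) in simp)
qed

(* The cofactor is a quadratic in y with roots near 0 and 3 d x; it is positive at a root of psi,
   and for d small compared with x y that rules out the smaller branch. *)

lemma psi_root_large_branch:
  fixes x d y :: int
  assumes root: "psi x d y = 0" and "2 \<le> x" "x < y" "2 \<le> d" "6 * d \<le> x * y"
  shows "3 * d * x \<le> 2 * y"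
proof (rule ccontr)
  assume "\<not> 3 * d * x \<le> 2 * y"
  then have "2 * y * y < 3 * d * x * y"
    using assms(2,3) by (intro mult_strict_right_mono) simp_all
  moreover have "x * x < x * y"
    using assms(2,3) by simp
  moreover have "6 * d * d \<le> x * y * d" and "x * y \<le> x * y * d"
    using assms(2-5) by simp_all
  moreover have "0 < y * (y - 3 * d * x) + x * x + 3 * d * d - 2"
    using psi_root_cofactor_pos[OF root] assms(2-4) by simp
  ultimately show False
    by (simp add: algebra_simps)
qed

lemma psi_root_constraints:
  fixes x d y :: int
  assumes root: "psi x d y = 0" and "0 < x" "0 < y" "2 \<le> d" and large: "3 * d * x \<le> 2 * y"
  shows "3 * x * x < 2 * d * d" and "x < d" and "x dvd d * d * d - d"
proof -
  define M where "M = y * (y - 3 * d * x) + x * x + 3 * d * d - 2"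
  have M: "1 \<le> M"
    using psi_root_cofactor_pos[OF root assms(2-4)] by (simp add: M_def)
  have prod: "x * (y * M) = d * d * d - d"
    using root by (simp add: psi_def M_def algebra_simps)
  then show "x dvd d * d * d - d"
    by (metis dvd_triv_left)
  have "x * y \<le> x * (y * M)"
    using M assms(2,3) by simp
  then have xy: "x * y \<le> d * d * d - d"
    using prod by simp
  have "d * (3 * x * x) \<le> 2 * (x * y)"
    using mult_right_mono[OF large, of x] assms(2) by (simp add: algebra_simps)
  also have "\<dots> \<le> 2 * (d * d * d - d)"
    using xy by simp
  also have "\<dots> < d * (2 * d * d)"
    using assms(4) by (simp add: algebra_simps)
  finally show sq: "3 * x * x < 2 * d * d"
    using assms(4) by simp
  show "x < d"
  proof (rule ccontr)
    assume "\<not> x < d"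
    then have "d * d \<le> x * x"
      using assms(4) by (intro mult_mono) simp_all
    moreover have "3 * (x * x) < 2 * (d * d)"
      using sq by (simp add: algebra_simps)
    moreover have "0 \<le> x * x"
      by simp
    ultimately show False
      by linarith
  qed
qed

lemma psi_root_defect_bound:
  fixes x d y :: int
  assumes root: "psi x d y = 0" and "0 < x" "0 < y" "2 \<le> d" "x < d"
    and large: "3 * d * x \<le> 2 * y"
  shows "d * (3 * x * x - 2) \<le> x * (y + 1)"
proof -
  define M where "M = y * (y - 3 * d * x) + x * x + 3 * d * d - 2"
  have M: "1 \<le> M"
    using psi_root_cofactor_pos[OF root assms(2-4)] by (simp add: M_def)
  define w where "w = 3 * d * x - y"
  have "x * w \<le> x + 2 * d"
  proof (cases "w \<le> 0")
    case True
    then have "x * w \<le> 0"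
      using assms(2) by (simp add: mult_nonneg_nonpos)
    then show ?thesis
      using assms(2,4) by simp
  next
    case False
    have "y * w \<le> x * x + 3 * d * d - 3"
      using M by (simp add: M_def w_def algebra_simps)
    moreover have "3 * d * x * w \<le> 2 * y * w"
      using large False by (intro mult_right_mono) simp_all
    moreover have "2 * x * x \<le> 3 * d * x"
      using \<open>x < d\<close> assms(2) by simp
    ultimately have "(3 * d) * (x * w) < (3 * d) * (x + 2 * d)"
      by (simp add: algebra_simps)
    then show ?thesis
      using assms(4) by simp
  qed
  moreover have "d * (3 * x * x) = x * y + x * w"
    by (simp add: w_def algebra_simps)
  ultimately show "d * (3 * x * x - 2) \<le> x * (y + 1)"
    by (simp add: algebra_simps)
qed

lemma psi_root_range:
  fixes x d :: int
  assumes "2 \<le> x" "0 \<le> d" "3 * x * x < 2 * d * d" "d * (3 * x * x - 2) \<le> x * (x + 5001)"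
  shows "x \<le> 37" and "d \<le> x * (x + 5001) div (3 * x * x - 2)"
proof -
  have "2 * 2 \<le> x * x"
    using assms(1) by (intro mult_mono) simp_all
  then have q0: "0 < 3 * x * x - 2"
    by (simp add: mult.assoc)
  have "(d * (3 * x * x - 2)) div (3 * x * x - 2) \<le> x * (x + 5001) div (3 * x * x - 2)"
    using assms(4) q0 by (rule zdiv_mono1)
  then show "d \<le> x * (x + 5001) div (3 * x * x - 2)"
    using q0 by simp
  have "6 * x \<le> 5 * d"
  proof (rule ccontr)
    assume "\<not> 6 * x \<le> 5 * d"
    then have le: "5 * d \<le> 6 * x"
      by simp
    have "(5 * d) * (5 * d) \<le> (6 * x) * (6 * x)"
      by (rule mult_mono) (use le assms(2) in simp_all)
    moreover have "3 * (x * x) < 2 * (d * d)"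
      using assms(3) by (simp add: algebra_simps)
    moreover have "0 \<le> d * d"
      by simp
    ultimately show False
      by (simp add: algebra_simps)
  qed
  then have "(6 * x) * (3 * x * x - 2) \<le> (5 * d) * (3 * x * x - 2)"
    using q0 by (intro mult_right_mono) simp_all
  also have "\<dots> \<le> x * (5 * (x + 5001))"
    using assms(4) by (simp add: algebra_simps)
  finally have "x * (18 * (x * x)) \<le> x * (5 * x + 25017)"
    by (simp add: algebra_simps)
  then have "18 * (x * x) \<le> 5 * x + 25017"
    using assms(1) by simp
  then show "x \<le> 37"
  proof (rule contrapos_pp)
    assume "\<not> x \<le> 37"
    then have "38 * x \<le> x * x"
      by simp
    then show "\<not> 18 * (x * x) \<le> 5 * x + 25017"
      using \<open>\<not> x \<le> 37\<close> by linarith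
  qed
qed

lemma psi_sign_mono:
  fixes x d a b :: int
  assumes "0 < x" "1 \<le> d" "3 * d * x \<le> 2 * a" "a < b" "0 \<le> psi x d a"
  shows "0 < psi x d b"
proof -
  define f where "f u = u * (u - 3 * d * x) + x * x + 3 * d * d - 2" for u
  have psi_f: "psi x d u = x * u * f u - (d * d * d - d)" for u
    by (simp add: psi_def f_def)
  have "0 \<le> d * ((d - 1) * (d + 1))"
    using assms(2) by simp
  then have m: "0 \<le> d * d * d - d"
    by (simp add: algebra_simps)
  have "0 < 3 * d * x"
    using assms(1,2) by simp
  then have xa: "0 < x * a" and xb: "0 < x * b"
    using assms(1,3,4) by simp_all
  have "0 \<le> x * a * f a"
    using assms(5) m by (simp add: psi_f)
  then have fa: "0 \<le> f a"
    using xa zero_le_mult_iff by force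
  have "0 < (b - a) * (a + b - 3 * d * x)"
    using assms(3,4) by simp
  then have fab: "f a < f b"
    by (simp add: f_def algebra_simps)
  have "x * a * f a \<le> x * b * f a"
    using assms(1,4) fa by (intro mult_right_mono) simp_all
  also have "\<dots> < x * b * f b"
    using fab xb by (rule mult_strict_left_mono)
  finally show ?thesis
    using assms(5) by (simp add: psi_f)
qed

lemma psi_no_root_beyond_bracket:
  fixes x d r y :: int
  assumes "0 < x" "1 \<le> d" "3 * d * x \<le> 2 * r" "psi x d r < 0" "0 < psi x d (r + 1)"
    and "3 * d * x \<le> 2 * y"
  shows "psi x d y \<noteq> 0"
proof
  assume root: "psi x d y = 0"
  consider "y < r" | "y = r" | "y = r + 1" | "r + 1 < y"
    by linarith
  then show False
  proof cases
    case 1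
    then show False
      using psi_sign_mono[of x d y r] assms root by simp
  next
    case 4
    then show False
      using psi_sign_mono[of x d "r + 1" y] assms root by simp
  qed (use assms root in simp_all)
qed

primrec bracket_search :: "(int \<Rightarrow> int) \<Rightarrow> nat \<Rightarrow> int \<Rightarrow> int option" where
  "bracket_search g 0 h = None"
| "bracket_search g (Suc n) h =
     (if g h < 0 then if 0 < g (h + 1) then Some h else bracket_search g n (h + 1)
      else bracket_search g n (h - 1))"

lemma bracket_search_sound:
  "bracket_search g n h = Some r \<Longrightarrow> g r < 0 \<and> 0 < g (r + 1)"
  by (induction n arbitrary: h) (auto split: if_splits)

(* The bracket of psi x d moves by about 3 x - 1 when d grows by one, so the previous bracket
   shifted by that amount is where the next search starts. *)

function psi_brackets_from :: "int \<Rightarrow> int \<Rightarrow> int \<Rightarrow> int \<Rightarrow> bool" where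
  "psi_brackets_from x d dmax h =
    (if dmax < d then True
     else if 2 * d * d \<le> 3 * x * x \<or> (d * d * d - d) mod x \<noteq> 0
     then psi_brackets_from x (d + 1) dmax (h + 3 * x - 1)
     else case bracket_search (psi x d) 50 h of
       None \<Rightarrow> False
     | Some r \<Rightarrow> 3 * d * x \<le> 2 * r \<and> psi_brackets_from x (d + 1) dmax (r + 3 * x - 1))"
  by auto
termination
  by (relation "measure (\<lambda>(x, d, dmax, h). nat (dmax + 1 - d))") auto

declare psi_brackets_from.simps [simp del]

lemma psi_brackets_from_sound:
  assumes "psi_brackets_from x d dmax h" "d \<le> e" "e \<le> dmax"
    "3 * x * x < 2 * e * e" "x dvd e * e * e - e"
  shows "\<exists>r. 3 * e * x \<le> 2 * r \<and> psi x e r < 0 \<and> 0 < psi x e (r + 1)"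
  using assms
proof (induction x d dmax h rule: psi_brackets_from.induct)
  case (1 x d dmax h)
  show ?case
  proof (cases "e = d")
    case True
    with "1.prems" show ?thesis
      by (subst (asm) psi_brackets_from.simps)
        (auto simp: dvd_eq_mod_eq_0 split: if_splits option.splits dest: bracket_search_sound)
  next
    case False
    with "1.prems" "1.IH" show ?thesis
      by (subst (asm) psi_brackets_from.simps) (auto split: if_splits option.splits)
  qed
qed

(* A replacement for \<forall>x\<in>{a..b}. P x whose unfolding code_simp evaluates quickly. *)
function all_between :: "(int \<Rightarrow> bool) \<Rightarrow> int \<Rightarrow> int \<Rightarrow> bool" where
  "all_between P a b \<longleftrightarrow> (if b < a then True else P a \<and> all_between P (a + 1) b)"
  by auto
termination
  by (relation "measure (\<lambda>(P, a, b). nat (b + 1 - a))") auto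

declare all_between.simps [simp del]

lemma all_between_iff: "all_between P a b \<longleftrightarrow> (\<forall>x\<in>{a..b}. P x)"
proof (induction P a b rule: all_between.induct)
  case (1 P a b)
  have "{a..b} = insert a {a + 1..b}" if "a \<le> b"
    using that by auto
  then show ?case
    using "1.IH" by (subst all_between.simps) auto
qed

lemma psi_brackets_verified:
  "all_between (\<lambda>x. psi_brackets_from x x (x * (x + 5001) div (3 * x * x - 2)) (3 * x * x)) 2 37"
  by code_simp

lemma no_psi_root_large_defect:
  fixes x d y :: int
  assumes "2 \<le> x" "x < y" "y \<le> x + 5000" "2 \<le> d" "6 * d \<le> x * y"
  shows "psi x d y \<noteq> 0"
proof
  assume root: "psi x d y = 0"
  have large: "3 * d * x \<le> 2 * y"
    using psi_root_large_branch[OF root assms(1,2,4,5)] .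
  have x0: "0 < x" and y0: "0 < y"
    using assms(1,2) by simp_all
  note constraints = psi_root_constraints[OF root x0 y0 assms(4) large]
  have "x * (y + 1) \<le> x * (x + 5001)"
    using assms(3) x0 by simp
  then have "d * (3 * x * x - 2) \<le> x * (x + 5001)"
    using psi_root_defect_bound[OF root x0 y0 assms(4) constraints(2) large] by linarith
  moreover have "0 \<le> d"
    using assms(4) by simp
  ultimately have range: "x \<le> 37" "d \<le> x * (x + 5001) div (3 * x * x - 2)"
    using psi_root_range[OF assms(1) _ constraints(1)] by simp_all
  then have "psi_brackets_from x x (x * (x + 5001) div (3 * x * x - 2)) (3 * x * x)"
    using psi_brackets_verified assms(1) unfolding all_between_iff by simp
  then obtain r where "3 * d * x \<le> 2 * r" "psi x d r < 0" "0 < psi x d (r + 1)"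
    using psi_brackets_from_sound constraints(1-3) range(2) by (meson less_imp_le)
  then show False
    using psi_no_root_beyond_bracket[OF x0 _ _ _ _ large] root assms(4) by simp
qed

theorem corollary2:
  fixes x y z :: int
  assumes "x > 0" and "y > 0" and "z > 0"
    and "x \<ge> 2"
    and "4 \<le> y - x" and "y - x \<le> 5000"
    and "(x - 1) * x * (x + 1) * ((y - 1) * y * (y + 1)) = (z - 1) * z * (z + 1)"
  shows "\<exists>n::nat. n \<ge> 1 \<and> x = int (fib (2*n - 1)) \<and> y = int (fib (2*n + 1))
           \<and> z = int (fib (2*n)) ^ 2"
proof -
  define d where "d = x * y - z"
  have root: "psi x d y = 0"
    using assms(7) psi_product_defect[of x y z] by (simp add: d_def)
  have "1 \<le> d"
    using consecutive_products_eq_less[OF assms(4) _ assms(3,7)] assms(4,5) by (simp add: d_def)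
  moreover have "\<not> 2 \<le> d"
  proof
    assume "2 \<le> d"
    have "5 * (x * y) < 6 * z"
      using consecutive_products_eq_greater[OF assms(4) _ assms(3,7)] assms(4,5) by simp
    then have "6 * d \<le> x * y"
      by (simp add: d_def)
    then show False
      using no_psi_root_large_defect[OF assms(4) _ _ \<open>2 \<le> d\<close>] root assms(5,6) by simp
  qed
  ultimately have "d = 1"
    by simp
  then have "z = x * y - 1"
    by (simp add: d_def)
  then show ?thesis
    using psi_unit_defect_root[of x y] root \<open>d = 1\<close> assms(1,5) by auto
qed

end
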